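(* Let $m,n\in\mathbb{N}$ and let $\psi:\mathbb{F}[X]^m\to\{k^r:r\in\mathbb{Z}\}\cup\{0\}$ be bounded with $\psi(\mathbf{q})>0$ for infinitely many $\mathbf{q}$. Then $$\dim_H\mathcal{W}(m,n;\psi)\le n(m-1)+\min\{\eta(\psi),n\}.$$
   Context: $\mathbb{F}$ is a finite field with $k$ elements; $\mathbb{F}((X^{-1}))$ is the field of formal Laurent series in $X^{-1}$ over $\mathbb{F}$ with absolute value $|f|=k^{\deg f}$ ($|0|=0$). On vectors, $|\mathbf{x}|_\infty=\max_i|x_i|$; matrices in $\mathrm{Mat}_{m\times n}(\mathbb{F}((X^{-1})))$ are identified with vectors in $\mathbb{F}((X^{-1}))^{mn}$. For $\mathbf{v}\in\mathbb{F}((X^{-1}))^n$, $\|\mathbf{v}\|$ is the $|\cdot|_\infty$-distance from $\mathbf{v}$ to $\mathbb{F}[X]^n$. $\mathcal{W}(m,n;\psi)=\{A\in\mathrm{Mat}_{m\times n}(\mathbb{F}((X^{-1}))):\|\mathbf{q}A\|<\psi(\mathbf{q})\text{ for infinitely many }\mathbf{q}\in\mathbb{F}[X]^m\}$. $\eta(\psi)=\inf\{\eta\in\mathbb{R}:\sum_{\mathbf{q}\in\mathbb{F}[X]^m\setminus\{0\}}|\mathbf{q}|_\infty^n(\psi(\mathbf{q})/|\mathbf{q}|_\infty)^\eta<\infty\}$. $\dim_H$ is Hausdorff dimension. *)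

theory Defs
  imports "HOL-Analysis.Analysis" "HOL-Computational_Algebra.Formal_Laurent_Series"
begin

text \<open>The field F((X^{-1})) of formal Laurent series in X^{-1} over a finite field F
  is modelled as the type 'a fls of Laurent series in the variable T = X^{-1}
  (Isabelle's fls_X plays the role of X^{-1}, fls_X_inv the role of X).
  The degree in X of a nonzero series f is then  - fls_subdegree f.\<close>

definition lsabs :: "'a::{field,finite} fls \<Rightarrow> real" where
  "lsabs f = (if f = 0 then 0 else real CARD('a) powr (real_of_int (- fls_subdegree f)))"

definition poly_to_ls :: "'a::{field,finite} poly \<Rightarrow> 'a fls" where
  "poly_to_ls p = poly (map_poly fls_const p) fls_X_inv"

definition vnorm :: "'a::{field,finite} fls ^ 'n::finite \<Rightarrow> real" where
  "vnorm v = Max (range (\<lambda>j. lsabs (v $ j)))"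

definition pnorm :: "'a::{field,finite} poly ^ 'm::finite \<Rightarrow> real" where
  "pnorm q = vnorm (\<chi> i. poly_to_ls (q $ i))"

definition dist_int :: "'a::{field,finite} fls ^ 'n::finite \<Rightarrow> real" where
  "dist_int v = (INF p \<in> (UNIV :: ('a poly ^ 'n) set). vnorm (v - (\<chi> j. poly_to_ls (p $ j))))"

definition qA :: "'a::{field,finite} poly ^ 'm::finite \<Rightarrow> 'a fls ^ 'n::finite ^ 'm \<Rightarrow> 'a fls ^ 'n" where
  "qA q A = (\<chi> i. poly_to_ls (q $ i)) v* A"

definition W_set :: "('a::{field,finite} poly ^ 'm::finite \<Rightarrow> real) \<Rightarrow> ('a fls ^ 'n::finite ^ 'm) set" where
  "W_set psi = {A. infinite {q. dist_int (qA q A) < psi q}}"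

definition eta :: "('a::{field,finite} poly ^ 'm::finite \<Rightarrow> real) \<Rightarrow> 'n::finite itself \<Rightarrow> ereal" where
  "eta psi _ = Inf {ereal e | e. (\<lambda>q. pnorm q ^ CARD('n) * (psi q / pnorm q) powr e)
                     summable_on (UNIV - {0})}"

text \<open>Matrices are identified with vectors in F((X^{-1}))^{mn}: sup-norm distance\<close>
definition mdist :: "'a::{field,finite} fls ^ 'n::finite ^ 'm::finite \<Rightarrow> 'a fls ^ 'n ^ 'm \<Rightarrow> real" where
  "mdist A B = Max (range (\<lambda>(i,j). lsabs ((A - B) $ i $ j)))"

definition gdiam :: "('x \<Rightarrow> 'x \<Rightarrow> real) \<Rightarrow> 'x set \<Rightarrow> ereal" where
  "gdiam d U = Sup {ereal (d x y) | x y. x \<in> U \<and> y \<in> U}"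

definition cover_term :: "('x \<Rightarrow> 'x \<Rightarrow> real) \<Rightarrow> real \<Rightarrow> 'x set \<Rightarrow> ennreal" where
  "cover_term d s U = (if U = {} then 0
      else if gdiam d U = 0 then (if s = 0 then 1 else 0)
      else ennreal (real_of_ereal (gdiam d U) powr s))"

definition hausdorff_delta :: "('x \<Rightarrow> 'x \<Rightarrow> real) \<Rightarrow> real \<Rightarrow> real \<Rightarrow> 'x set \<Rightarrow> ennreal" where
  "hausdorff_delta d s \<delta> S = (INF U \<in> {U :: nat \<Rightarrow> 'x set. S \<subseteq> (\<Union>i. U i) \<and> (\<forall>i. gdiam d (U i) \<le> ereal \<delta>)}.
       (\<Sum>i. cover_term d s (U i)))"

definition hausdorff_measure :: "('x \<Rightarrow> 'x \<Rightarrow> real) \<Rightarrow> real \<Rightarrow> 'x set \<Rightarrow> ennreal" where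
  "hausdorff_measure d s S = (SUP \<delta> \<in> {0<..}. hausdorff_delta d s \<delta> S)"

definition hausdorff_dim :: "('x \<Rightarrow> 'x \<Rightarrow> real) \<Rightarrow> 'x set \<Rightarrow> ereal" where
  "hausdorff_dim d S = Inf {ereal s | s. s \<ge> 0 \<and> hausdorff_measure d s S = 0}"

end

theory Submission
  imports Defs
begin

text \<open>
  Fix R and consider the matrices whose entries have absolute value at most k^R. Let q have degree D,
  attained at the coordinate i0, and let psi q = k^r with t = D - r \<ge> 0. If ||qA|| and ||qA'|| are
  both below psi q, and A, A' agree in row i0 to precision k^-(D+1) and in the other rows to precision
  k^-t, then they agree in row i0 to precision k^-t as well: the nearest polynomial vectors to qA and
  qA' coincide, and q_i0 has full degree D. So the q-set is covered by k^(n(D+1+R) + n(m-1)(t+R))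
  cylinders of diameter psi q / |q| = k^-t, whose s-dimensional content is at most
  C_R |q|^n (psi q / |q|)^(s - n(m-1)). For s > n(m-1) + eta this is the general term of a convergent
  series, and every matrix in W lies in the q-sets of infinitely many q, so the tails of the series
  give covers of W of arbitrarily small content. The bound mn comes from covering by cylinders alone.
\<close>

no_notation fps_nth (infixl "$" 75)

section \<open>Coefficient valuation of Laurent series\<close>

definition vanishes_below :: "int \<Rightarrow> 'a::zero fls \<Rightarrow> bool" where
  "vanishes_below t f \<longleftrightarrow> (\<forall>l<t. fls_nth f l = 0)"

lemma vanishes_below_add: "vanishes_below t f \<Longrightarrow> vanishes_below t g \<Longrightarrow> vanishes_below t (f + g)"
  by (simp add: vanishes_below_def)

lemma vanishes_below_diff:
  "vanishes_below t f \<Longrightarrow> vanishes_below t (g::'a::ab_group_add fls) \<Longrightarrow> vanishes_below t (f - g)"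
  by (simp add: vanishes_below_def)

lemma vanishes_below_mono: "vanishes_below t f \<Longrightarrow> t' \<le> t \<Longrightarrow> vanishes_below t' f"
  by (simp add: vanishes_below_def)

lemma vanishes_below_sum:
  "(\<And>i. i \<in> I \<Longrightarrow> vanishes_below t (f i)) \<Longrightarrow> vanishes_below t (\<Sum>i\<in>I. f i)"
  by (induction I rule: infinite_finite_induct) (auto simp: vanishes_below_def)

lemma vanishes_below_iff_subdegree: "vanishes_below t f \<longleftrightarrow> f = 0 \<or> t \<le> fls_subdegree f"
  using fls_subdegree_geI[of f t] by (auto simp: vanishes_below_def)

lemma vanishes_below_mult:
  "vanishes_below a f \<Longrightarrow> vanishes_below b g \<Longrightarrow> vanishes_below (a + b) (f * (g::'a::field fls))"
  by (cases "f = 0"; cases "g = 0") (auto simp: vanishes_below_iff_subdegree)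

lemma vanishes_below_mult_cancel:
  "g \<noteq> 0 \<Longrightarrow> vanishes_below a (g * (f::'a::field fls)) \<Longrightarrow> vanishes_below (a - fls_subdegree g) f"
  by (cases "f = 0") (auto simp: vanishes_below_iff_subdegree)

lemma two_le_card_field: "CARD('a::{field,finite}) \<ge> 2"
proof -
  have "card {0::'a, 1} \<le> CARD('a)" by (rule card_mono) auto
  then show ?thesis by simp
qed

lemma lsabs_nonneg: "lsabs f \<ge> 0"
  by (simp add: lsabs_def)

lemma lsabs_le_powr_iff:
  "lsabs (f::'a::{field,finite} fls) \<le> real CARD('a) powr - real_of_int t \<longleftrightarrow> vanishes_below t f"
  using two_le_card_field[where 'a='a]
  by (cases "f = 0") (auto simp: lsabs_def vanishes_below_iff_subdegree)

lemma lsabs_less_powr_iff: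
  "lsabs (f::'a::{field,finite} fls) < real CARD('a) powr real_of_int r \<longleftrightarrow> vanishes_below (1 - r) f"
  using two_le_card_field[where 'a='a]
  by (cases "f = 0") (auto simp: lsabs_def vanishes_below_iff_subdegree)

lemma fls_nth_poly_to_ls:
  "fls_nth (poly_to_ls p) l = (if l \<le> 0 then coeff p (nat (- l)) else 0)"
proof (induction p arbitrary: l)
  case 0
  then show ?case by (simp add: poly_to_ls_def)
next
  case (pCons a p)
  have "poly_to_ls (pCons a p) = fls_const a + fls_X_inv * poly_to_ls p"
    by (simp add: poly_to_ls_def map_poly_pCons)
  moreover have "l < 0 \<Longrightarrow> nat (- l) = Suc (nat (- (l + 1)))" by simp
  ultimately show ?case
    using pCons.IH[of "l + 1"] by (auto simp: fls_X_inv_times_conv_shift coeff_pCons)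
qed

lemma poly_to_ls_0 [simp]: "poly_to_ls 0 = 0"
  by (simp add: poly_to_ls_def)

lemma vanishes_below_poly_to_ls: "degree p \<le> D \<Longrightarrow> vanishes_below (- int D) (poly_to_ls p)"
  unfolding vanishes_below_def by (auto simp: fls_nth_poly_to_ls intro!: coeff_eq_0)

lemma poly_to_ls_eq_0_iff [simp]: "poly_to_ls p = 0 \<longleftrightarrow> p = 0"
  using fls_nth_poly_to_ls[of p "- int (degree p)"] by auto

lemma fls_subdegree_poly_to_ls: "p \<noteq> 0 \<Longrightarrow> fls_subdegree (poly_to_ls p) = - int (degree p)"
  by (rule fls_subdegree_eqI) (auto simp: fls_nth_poly_to_ls intro!: coeff_eq_0)

lemma lsabs_poly_to_ls:
  "p \<noteq> 0 \<Longrightarrow> lsabs (poly_to_ls (p::'a::{field,finite} poly)) = real CARD('a) ^ degree p"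
  using two_le_card_field[where 'a='a]
  by (simp add: lsabs_def fls_subdegree_poly_to_ls powr_realpow)

lemma poly_to_ls_eq_if_vanishes_below_1:
  "vanishes_below 1 (poly_to_ls p - poly_to_ls p') \<Longrightarrow> poly_to_ls p = poly_to_ls p'"
  by (simp add: fls_eq_iff vanishes_below_def fls_nth_poly_to_ls not_less)

section \<open>Polynomial vectors and the norms\<close>

definition vdegree :: "'a::zero poly ^ 'm::finite \<Rightarrow> nat" where
  "vdegree q = Max (range (\<lambda>i. degree (q $ i)))"

definition vdegree_index :: "'a::zero poly ^ 'm::finite \<Rightarrow> 'm" where
  "vdegree_index q = (SOME i. q $ i \<noteq> 0 \<and> degree (q $ i) = vdegree q)"

lemma degree_le_vdegree: "degree (q $ i) \<le> vdegree q"
  unfolding vdegree_def by (rule Max_ge) auto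

lemma vdegree_index_attains:
  assumes "q \<noteq> 0"
  shows "q $ vdegree_index q \<noteq> 0" "degree (q $ vdegree_index q) = vdegree q"
proof -
  have "vdegree q \<in> range (\<lambda>i. degree (q $ i))" unfolding vdegree_def by (rule Max_in) auto
  then obtain i where i: "degree (q $ i) = vdegree q" by auto
  obtain j where j: "q $ j \<noteq> 0" using assms by (auto simp: vec_eq_iff)
  have "\<exists>i. q $ i \<noteq> 0 \<and> degree (q $ i) = vdegree q"
  proof (cases "q $ i = 0")
    case True
    then show ?thesis using i j degree_le_vdegree[of q j] by auto
  qed (use i in auto)
  then have "q $ vdegree_index q \<noteq> 0 \<and> degree (q $ vdegree_index q) = vdegree q"
    unfolding vdegree_index_def by (rule someI_ex)
  then show "q $ vdegree_index q \<noteq> 0" "degree (q $ vdegree_index q) = vdegree q" by auto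
qed

lemma finite_vdegree_le: "finite {q::'a::{zero,finite} poly ^ 'm::finite. vdegree q \<le> M}"
proof -
  let ?S = "{q::'a poly ^ 'm. vdegree q \<le> M}"
  let ?coeffs = "\<lambda>q::'a poly ^ 'm. restrict (\<lambda>(i, l). coeff (q $ i) l) (UNIV \<times> {..M})"
  have "inj_on ?coeffs ?S"
  proof (rule inj_onI)
    fix q q' assume "q \<in> ?S" "q' \<in> ?S" and eq: "?coeffs q = ?coeffs q'"
    have "coeff (q $ i) l = coeff (q' $ i) l" for i l
    proof (cases "l \<le> M")
      case True
      then show ?thesis using fun_cong[OF eq, of "(i, l)"] by simp
    next
      case False
      then show ?thesis
        using \<open>q \<in> ?S\<close> \<open>q' \<in> ?S\<close> degree_le_vdegree[of q i] degree_le_vdegree[of q' i]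
        by (simp add: coeff_eq_0)
    qed
    then show "q = q'" by (simp add: vec_eq_iff poly_eq_iff)
  qed
  moreover have "?coeffs ` ?S \<subseteq> PiE (UNIV \<times> {..M}) (\<lambda>_. UNIV)"
    by (auto simp: PiE_def extensional_def)
  moreover have "finite (PiE ((UNIV :: 'm set) \<times> {..M}) (\<lambda>_. UNIV :: 'a set))"
    by (rule finite_PiE) auto
  ultimately show ?thesis by (meson finite_imageD finite_subset)
qed

lemma countable_poly_vec: "countable (UNIV :: ('a::{zero,finite} poly ^ 'm::finite) set)"
proof -
  have "UNIV = (\<Union>M. {q::'a poly ^ 'm. vdegree q \<le> M})" by auto
  also have "countable \<dots>" by (rule countable_UN) (auto intro: countable_finite finite_vdegree_le)
  finally show ?thesis .
qed

lemma vnorm_ge: "lsabs (v $ j) \<le> vnorm v"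
  unfolding vnorm_def by (rule Max_ge) auto

lemma vnorm_nonneg: "vnorm v \<ge> 0"
  by (meson order_trans lsabs_nonneg vnorm_ge)

lemma vnorm_less_iff: "vnorm v < x \<longleftrightarrow> (\<forall>j. lsabs (v $ j) < x)"
  unfolding vnorm_def by (subst Max_less_iff) auto

lemma pnorm_eq_power_vdegree:
  assumes "q \<noteq> 0"
  shows "pnorm (q::'a::{field,finite} poly ^ 'm::finite) = real CARD('a) ^ vdegree q"
  unfolding pnorm_def vnorm_def
proof (rule Max_eqI)
  fix y assume "y \<in> range (\<lambda>j. lsabs ((\<chi> i. poly_to_ls (q $ i)) $ j))"
  then obtain i where y: "y = lsabs (poly_to_ls (q $ i))" by auto
  show "y \<le> real CARD('a) ^ vdegree q"
  proof (cases "q $ i = 0")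
    case False
    then show ?thesis
      using y lsabs_poly_to_ls[OF False] degree_le_vdegree[of q i] two_le_card_field[where 'a='a]
      by (simp add: power_increasing)
  qed (use y in \<open>auto simp: lsabs_def\<close>)
next
  show "real CARD('a) ^ vdegree q \<in> range (\<lambda>j. lsabs ((\<chi> i. poly_to_ls (q $ i)) $ j))"
    using vdegree_index_attains[OF assms] lsabs_poly_to_ls[of "q $ vdegree_index q"] by (metis rangeI vec_lambda_beta)
qed auto

lemma pnorm_nonneg: "pnorm q \<ge> 0"
  by (simp add: pnorm_def vnorm_nonneg)

lemma dist_int_nonneg: "dist_int v \<ge> 0"
  unfolding dist_int_def by (rule cINF_greatest) (auto simp: vnorm_nonneg)

lemma dist_int_less_powrD:
  assumes "dist_int v < real CARD('a) powr real_of_int r"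
  shows "\<exists>P::'a::{field,finite} poly ^ 'n::finite. \<forall>j. vanishes_below (1 - r) (v $ j - poly_to_ls (P $ j))"
proof -
  have "bdd_below ((\<lambda>p::'a poly ^ 'n. vnorm (v - (\<chi> j. poly_to_ls (p $ j)))) ` UNIV)"
    by (rule bdd_belowI[of _ 0]) (auto simp: vnorm_nonneg)
  then obtain P :: "'a poly ^ 'n" where "vnorm (v - (\<chi> j. poly_to_ls (P $ j))) < real CARD('a) powr r"
    using assms unfolding dist_int_def by (subst (asm) cINF_less_iff) auto
  then show ?thesis by (auto simp: vnorm_less_iff lsabs_less_powr_iff)
qed

lemma dist_int_0: "dist_int (0 :: 'a::{field,finite} fls ^ 'n::finite) = 0"
proof -
  have "bdd_below ((\<lambda>p::'a poly ^ 'n. vnorm (0 - (\<chi> j. poly_to_ls (p $ j)))) ` UNIV)"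
    by (rule bdd_belowI[of _ 0]) (auto simp: vnorm_nonneg)
  then have "dist_int (0 :: 'a fls ^ 'n) \<le> vnorm (0 - (\<chi> j. poly_to_ls ((0::'a poly ^ 'n) $ j)))"
    unfolding dist_int_def by (rule cINF_lower) auto
  also have "\<dots> = 0" unfolding vnorm_def by (simp add: lsabs_def)
  finally show ?thesis using dist_int_nonneg[of "0 :: 'a fls ^ 'n"] by linarith
qed

lemma qA_nth: "qA q A $ j = (\<Sum>i\<in>UNIV. poly_to_ls (q $ i) * A $ i $ j)"
  by (simp add: qA_def vector_matrix_mult_def)

lemma qA_0 [simp]: "qA q 0 = 0"
  by (simp add: qA_def vector_matrix_mult_def vec_eq_iff)

lemma mdist_self [simp]: "mdist A A = 0"
  unfolding mdist_def by (simp add: lsabs_def)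

lemma mdist_le_powr_if_vanishes_below:
  assumes "\<And>i j. vanishes_below t (A $ i $ j - B $ i $ j)"
  shows "mdist A (B :: 'a::{field,finite} fls ^ 'n::finite ^ 'm::finite) \<le> real CARD('a) powr - real_of_int t"
  unfolding mdist_def using assms by (subst Max_le_iff) (auto simp: lsabs_le_powr_iff)

section \<open>Covers and Hausdorff dimension\<close>

lemma gdiam_leI: "(\<And>x y. x \<in> U \<Longrightarrow> y \<in> U \<Longrightarrow> d x y \<le> r) \<Longrightarrow> gdiam d U \<le> ereal r"
  unfolding gdiam_def by (rule Sup_least) auto

lemma gdiam_nonneg: "(\<And>x. d x x = 0) \<Longrightarrow> x \<in> U \<Longrightarrow> gdiam d U \<ge> 0"
  unfolding gdiam_def by (rule Sup_upper2[of "ereal (d x x)"]) auto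

lemma gdiam_empty [simp]: "gdiam d {} = -\<infinity>"
  unfolding gdiam_def by (simp add: bot_ereal_def[symmetric])

lemma cover_term_empty [simp]: "cover_term d s {} = 0"
  by (simp add: cover_term_def)

lemma cover_term_le_powr:
  assumes "\<And>x. d x x = 0" "gdiam d U \<le> ereal r" "r > 0" "s \<ge> 0"
  shows "cover_term d s U \<le> ennreal (r powr s)"
proof (cases "U = {} \<or> gdiam d U = 0")
  case False
  then have "0 < gdiam d U" using gdiam_nonneg[of d, OF assms(1)] by (metis all_not_in_conv order_less_le)
  then obtain g where "gdiam d U = ereal g" "0 < g" "g \<le> r" using assms(2) by (cases "gdiam d U") auto
  then show ?thesis using False assms(4) by (auto simp: cover_term_def intro!: ennreal_leI powr_mono2)
qed (use assms(3) in \<open>auto simp: cover_term_def\<close>)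

lemma cover_term_0_nonempty:
  assumes "\<And>x. d x x = 0" "gdiam d U \<le> ereal r" "U \<noteq> {}"
  shows "cover_term d 0 U = 1"
proof -
  have "0 \<le> gdiam d U" using gdiam_nonneg[of d, OF assms(1)] assms(3) by blast
  then show ?thesis using assms(2,3) by (cases "gdiam d U") (auto simp: cover_term_def)
qed

lemma sum_cover_term_le_card:
  assumes "finite X" "G \<subseteq> X" "\<And>x. x \<in> X \<Longrightarrow> cover_term d s (U x) \<le> ennreal r" "r \<ge> 0"
  shows "(\<Sum>x\<in>G. cover_term d s (U x)) \<le> ennreal (real (card X) * r)"
proof -
  have "(\<Sum>x\<in>G. cover_term d s (U x)) \<le> (\<Sum>x\<in>X. cover_term d s (U x))"
    by (rule sum_mono2) (use assms in auto)
  also have "\<dots> \<le> of_nat (card X) * ennreal r" by (rule sum_bounded_above) (use assms in auto)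
  also have "\<dots> = ennreal (real (card X) * r)"
    using assms by (simp add: ennreal_mult ennreal_of_nat_eq_real_of_nat)
  finally show ?thesis .
qed

lemma sum_le_sum_fibres:
  fixes h :: "'i \<times> 'c \<Rightarrow> ennreal"
  assumes "finite G" "G \<subseteq> Sigma I P" "\<And>i. i \<in> I \<Longrightarrow> finite (P i)"
    and fibre: "\<And>i. i \<in> I \<Longrightarrow> (\<Sum>c\<in>P i. h (i, c)) \<le> g i"
  shows "sum h G \<le> (\<Sum>i\<in>fst ` G. g i)"
proof -
  have fin: "finite (P i)" if "i \<in> fst ` G" for i using assms(2,3) that by auto
  have "sum h G \<le> sum h (Sigma (fst ` G) P)"
    using assms(1,2) fin by (intro sum_mono2) force+
  also have "\<dots> = (\<Sum>i\<in>fst ` G. \<Sum>c\<in>P i. h (i, c))"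
    using assms(1) fin by (subst sum.Sigma) auto
  also have "\<dots> \<le> (\<Sum>i\<in>fst ` G. g i)"
    using assms(2) by (intro sum_mono fibre) auto
  finally show ?thesis .
qed

lemma hausdorff_delta_le_countable_cover:
  fixes U :: "'j \<Rightarrow> 'x set"
  assumes "countable J" and cover: "S \<subseteq> (\<Union>j\<in>J. U j)"
    and diam: "\<And>j. j \<in> J \<Longrightarrow> gdiam d (U j) \<le> ereal \<delta>"
    and sums: "\<And>F. finite F \<Longrightarrow> F \<subseteq> J \<Longrightarrow> (\<Sum>j\<in>F. cover_term d s (U j)) \<le> B"
  shows "hausdorff_delta d s \<delta> S \<le> B"
proof -
  define G where "G i = (if i \<in> to_nat_on J ` J then U (from_nat_into J i) else {})" for i
  have G: "G (to_nat_on J j) = U j" if "j \<in> J" for j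
    using that \<open>countable J\<close> by (auto simp: G_def)
  have "S \<subseteq> (\<Union>i. G i)" using cover G by blast
  moreover have "gdiam d (G i) \<le> ereal \<delta>" for i
    using diam \<open>countable J\<close> by (auto simp: G_def)
  moreover have "(\<Sum>i<n. cover_term d s (G i)) \<le> B" for n
  proof -
    define F where "F = {j \<in> J. to_nat_on J j < n}"
    have inj: "inj_on (to_nat_on J) F" using \<open>countable J\<close> by (auto simp: F_def intro: inj_on_subset)
    have "to_nat_on J ` F \<subseteq> {..<n}" by (auto simp: F_def)
    then have "finite F" using finite_subset finite_imageD[OF _ inj] by blast
    have "(\<Sum>i<n. cover_term d s (G i)) = (\<Sum>i\<in>to_nat_on J ` F. cover_term d s (G i))"
      by (rule sum.mono_neutral_right) (auto simp: F_def G_def)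
    also have "\<dots> = (\<Sum>j\<in>F. cover_term d s (U j))"
      unfolding sum.reindex[OF inj] by (rule sum.cong) (auto simp: F_def G)
    also have "\<dots> \<le> B" using sums \<open>finite F\<close> by (auto simp: F_def)
    finally show ?thesis .
  qed
  then have "(\<Sum>i. cover_term d s (G i)) \<le> B" by (simp add: suminf_eq_SUP SUP_least)
  ultimately show ?thesis unfolding hausdorff_delta_def by (intro INF_lower2[of G]) auto
qed

lemma hausdorff_delta_le_layered_cover:
  fixes U :: "nat \<Rightarrow> 'j \<Rightarrow> 'x set"
  assumes "\<And>R. countable (X R)" and cover: "S \<subseteq> (\<Union>R. \<Union>x\<in>X R. U R x)"
    and diam: "\<And>R x. x \<in> X R \<Longrightarrow> gdiam d (U R x) \<le> ereal \<delta>"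
    and layer: "\<And>R G. finite G \<Longrightarrow> G \<subseteq> X R \<Longrightarrow> (\<Sum>x\<in>G. cover_term d s (U R x)) \<le> ennreal (e / 2 ^ Suc R)"
    and "e \<ge> 0"
  shows "hausdorff_delta d s \<delta> S \<le> ennreal e"
proof (rule hausdorff_delta_le_countable_cover[where J = "Sigma UNIV X" and U = "case_prod U"])
  fix F assume F: "finite F" "F \<subseteq> Sigma UNIV X"
  define M where "M = Suc (Max (insert 0 (fst ` F)))"
  define FR where "FR R = snd ` (F \<inter> {R} \<times> UNIV)" for R
  have "finite (FR R)" for R using F by (simp add: FR_def)
  have "F \<subseteq> Sigma {..<M} FR"
  proof
    fix j assume "j \<in> F"
    then have "fst j \<le> Max (insert 0 (fst ` F))" using F(1) by (intro Max_ge) auto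
    then show "j \<in> Sigma {..<M} FR" using \<open>j \<in> F\<close> by (cases j) (force simp: M_def FR_def)
  qed
  then have "(\<Sum>j\<in>F. cover_term d s (case_prod U j)) \<le> (\<Sum>j\<in>Sigma {..<M} FR. cover_term d s (case_prod U j))"
    by (intro sum_mono2) (auto intro: \<open>finite (FR _)\<close>)
  also have "\<dots> = (\<Sum>R<M. \<Sum>x\<in>FR R. cover_term d s (U R x))"
    using sum.Sigma[of "{..<M}" FR "\<lambda>R x. cover_term d s (U R x)"] \<open>finite (FR _)\<close>
    by (simp add: split_def)
  also have "\<dots> \<le> (\<Sum>R<M. ennreal (e / 2 ^ Suc R))"
    by (intro sum_mono layer \<open>finite (FR _)\<close>) (use F in \<open>auto simp: FR_def\<close>)
  also have "\<dots> = ennreal (\<Sum>R<M. e / 2 ^ Suc R)" using \<open>e \<ge> 0\<close> by simp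
  also have "(\<Sum>R<M. e / 2 ^ Suc R) = e * (1 - 1 / 2 ^ M)"
    by (induction M) (auto simp: field_simps)
  also have "\<dots> \<le> ennreal e" using \<open>e \<ge> 0\<close> by (auto intro!: ennreal_leI mult_left_le)
  finally show "(\<Sum>j\<in>F. cover_term d s (case_prod U j)) \<le> ennreal e" .
next
  show "S \<subseteq> (\<Union>j\<in>Sigma UNIV X. case_prod U j)" using cover by auto
qed (use assms in auto)

lemma hausdorff_delta_le_tail_cover:
  fixes U :: "nat \<Rightarrow> 'q \<Rightarrow> 'c \<Rightarrow> 'x set"
  assumes "\<And>R. countable (Q R)" "\<And>R q. q \<in> Q R \<Longrightarrow> finite (P R q)"
    and cover: "S \<subseteq> (\<Union>R. \<Union>q\<in>Q R. \<Union>c\<in>P R q. U R q c)"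
    and diam: "\<And>R q c. q \<in> Q R \<Longrightarrow> gdiam d (U R q c) \<le> ereal \<delta>"
    and content: "\<And>R q. q \<in> Q R \<Longrightarrow> (\<Sum>c\<in>P R q. cover_term d s (U R q c)) \<le> ennreal (g R q)"
    and tail: "\<And>R F. finite F \<Longrightarrow> F \<subseteq> Q R \<Longrightarrow> sum (g R) F \<le> e / 2 ^ Suc R"
    and "\<And>R q. g R q \<ge> 0" "e \<ge> 0"
  shows "hausdorff_delta d s \<delta> S \<le> ennreal e"
proof (rule hausdorff_delta_le_layered_cover[where X = "\<lambda>R. Sigma (Q R) (P R)" and U = "\<lambda>R. case_prod (U R)"])
  fix R G assume G: "finite G" "G \<subseteq> Sigma (Q R) (P R)"
  have "(\<Sum>x\<in>G. cover_term d s (case_prod (U R) x)) \<le> (\<Sum>q\<in>fst ` G. ennreal (g R q))"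
    using G assms(2) content by (intro sum_le_sum_fibres) auto
  also have "\<dots> = ennreal (sum (g R) (fst ` G))"
    using assms(7) by (rule sum_ennreal)
  also have "\<dots> \<le> ennreal (e / 2 ^ Suc R)"
    using G by (intro ennreal_leI tail) auto
  finally show "(\<Sum>x\<in>G. cover_term d s (case_prod (U R) x)) \<le> ennreal (e / 2 ^ Suc R)" .
next
  show "S \<subseteq> (\<Union>R. \<Union>x\<in>Sigma (Q R) (P R). case_prod (U R) x)" using cover by fastforce
  show "countable (Sigma (Q R) (P R))" for R
    by (rule countable_SIGMA[OF assms(1) countable_finite[OF assms(2)]])
qed (use assms in auto)

lemma hausdorff_measure_zeroI:
  assumes "\<And>\<delta> e. \<delta> > 0 \<Longrightarrow> e > 0 \<Longrightarrow> hausdorff_delta d s \<delta> S \<le> ennreal e"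
  shows "hausdorff_measure d s S = 0"
proof -
  have "hausdorff_delta d s \<delta> S \<le> 0" if "\<delta> > 0" for \<delta>
    by (rule ennreal_le_epsilon) (use assms[OF that] in auto)
  then show ?thesis unfolding hausdorff_measure_def by simp
qed

lemma hausdorff_delta_0_ge_1:
  assumes "\<And>x. d x x = 0" "S \<noteq> {}"
  shows "hausdorff_delta d 0 \<delta> S \<ge> 1"
  unfolding hausdorff_delta_def
proof (rule INF_greatest)
  fix U assume U: "U \<in> {U :: nat \<Rightarrow> _. S \<subseteq> (\<Union>i. U i) \<and> (\<forall>i. gdiam d (U i) \<le> ereal \<delta>)}"
  then obtain i where "U i \<noteq> {}" using assms(2) by blast
  then have "1 = cover_term d 0 (U i)" using U cover_term_0_nonempty[of d, OF assms(1)] by auto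
  also have "\<dots> \<le> (\<Sum>j. cover_term d 0 (U j))"
    using sum_le_suminf[OF summableI, of "{i}" "\<lambda>j. cover_term d 0 (U j)"] by simp
  finally show "1 \<le> (\<Sum>j. cover_term d 0 (U j))" .
qed

lemma hausdorff_dim_le:
  assumes "\<And>x. d x x = 0" "S \<noteq> {}"
    and null: "\<And>s. s \<ge> 0 \<Longrightarrow> ereal s > D \<Longrightarrow> hausdorff_measure d s S = 0"
  shows "hausdorff_dim d S \<le> D"
proof -
  have "D \<ge> 0"
  proof (rule ccontr)
    assume "\<not> D \<ge> 0"
    then have "hausdorff_measure d 0 S = 0" by (intro null) (auto simp: not_le zero_ereal_def[symmetric])
    moreover have "1 \<le> hausdorff_delta d 0 1 S" by (rule hausdorff_delta_0_ge_1[of d, OF assms(1,2)])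
    moreover have "hausdorff_delta d 0 1 S \<le> hausdorff_measure d 0 S"
      unfolding hausdorff_measure_def by (rule SUP_upper) auto
    ultimately show False by simp
  qed
  show ?thesis
  proof (rule ereal_le_epsilon2)
    fix e :: real assume "e > 0"
    show "hausdorff_dim d S \<le> D + ereal e"
    proof (cases D)
      case (real r)
      then have "ereal (r + e) \<in> {ereal s | s. s \<ge> 0 \<and> hausdorff_measure d s S = 0}"
        using null[of "r + e"] \<open>D \<ge> 0\<close> \<open>e > 0\<close> by auto
      then show ?thesis unfolding hausdorff_dim_def using real by (auto intro: Inf_lower)
    qed (use \<open>D \<ge> 0\<close> in auto)
  qed
qed

section \<open>Cylinders\<close>

definition coeff_box :: "nat \<Rightarrow> ('a::zero fls ^ 'n::finite ^ 'm::finite) set" where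
  "coeff_box R = {A. \<forall>i j. vanishes_below (- int R) (A $ i $ j)}"

lemma ex_coeff_box: "\<exists>R. A \<in> coeff_box R"
proof -
  define R where "R = Max (range (\<lambda>(i, j). nat (- fls_subdegree (A $ i $ j))))"
  have "vanishes_below (- int R) (A $ i $ j)" for i j
  proof -
    have "nat (- fls_subdegree (A $ i $ j)) \<le> R" unfolding R_def by (rule Max_ge) auto
    then show ?thesis by (simp add: vanishes_below_iff_subdegree nat_le_iff)
  qed
  then show ?thesis by (auto simp: coeff_box_def)
qed

definition cyl_index :: "nat \<Rightarrow> ('m::finite \<Rightarrow> int) \<Rightarrow> ('m \<times> 'n::finite \<times> int) set" where
  "cyl_index R L = Sigma UNIV (\<lambda>i. UNIV \<times> {- int R..<L i})"

definition cyl_labels :: "nat \<Rightarrow> ('m::finite \<Rightarrow> int) \<Rightarrow> ('m \<times> 'n::finite \<times> int \<Rightarrow> 'a) set" where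
  "cyl_labels R L = PiE (cyl_index R L) (\<lambda>_. UNIV)"

definition cylinder ::
    "nat \<Rightarrow> ('m::finite \<Rightarrow> int) \<Rightarrow> ('m \<times> 'n::finite \<times> int \<Rightarrow> 'a) \<Rightarrow> ('a::zero fls ^ 'n ^ 'm) set" where
  "cylinder R L c = {A \<in> coeff_box R. \<forall>(i, j, l) \<in> cyl_index R L. fls_nth (A $ i $ j) l = c (i, j, l)}"

lemma finite_cyl_index: "finite (cyl_index R L)"
  unfolding cyl_index_def by (intro finite_SigmaI) auto

lemma card_cyl_index:
  "card (cyl_index R L :: ('m::finite \<times> 'n::finite \<times> int) set) = (\<Sum>i\<in>UNIV. CARD('n) * nat (L i + int R))"
  unfolding cyl_index_def by (subst card_SigmaI) (auto simp: card_cartesian_product)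

lemma finite_cyl_labels: "finite (cyl_labels R L :: (_ \<Rightarrow> 'a::finite) set)"
  unfolding cyl_labels_def by (intro finite_PiE finite_cyl_index) auto

lemma card_cyl_labels:
  "card (cyl_labels R L :: ('m::finite \<times> 'n::finite \<times> int \<Rightarrow> 'a::finite) set)
    = CARD('a) ^ card (cyl_index R L :: ('m \<times> 'n \<times> int) set)"
  unfolding cyl_labels_def by (simp add: card_PiE finite_cyl_index)

lemma countable_cyl_labels: "countable (cyl_labels R L :: (_ \<Rightarrow> 'a::finite) set)"
  by (rule countable_finite[OF finite_cyl_labels])

lemma coeff_box_subset_cylinders:
  "(coeff_box R :: ('a::zero fls ^ 'n::finite ^ 'm::finite) set) \<subseteq> (\<Union>c\<in>cyl_labels R L. cylinder R L c)"
proof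
  fix A assume A: "A \<in> (coeff_box R :: ('a fls ^ 'n ^ 'm) set)"
  let ?c = "restrict (\<lambda>(i, j, l). fls_nth (A $ i $ j) l) (cyl_index R L :: ('m \<times> 'n \<times> int) set)"
  have "?c \<in> cyl_labels R L" "A \<in> cylinder R L ?c" using A by (auto simp: cylinder_def cyl_labels_def)
  then show "A \<in> (\<Union>c\<in>cyl_labels R L. cylinder R L c)" by blast
qed

lemma vanishes_below_cylinder_diff:
  assumes "A \<in> cylinder R L c" "A' \<in> cylinder R L c" "t \<le> L i"
  shows "vanishes_below t (A $ i $ j - A' $ i $ j)"
  unfolding vanishes_below_def
proof (intro allI impI)
  fix l assume "l < t"
  show "fls_nth (A $ i $ j - A' $ i $ j) l = 0"
  proof (cases "l < - int R")
    case True
    then show ?thesis using assms by (auto simp: cylinder_def coeff_box_def vanishes_below_def)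
  next
    case False
    then have "(i, j, l) \<in> cyl_index R L" using \<open>l < t\<close> assms(3) by (auto simp: cyl_index_def)
    then show ?thesis using assms(1,2) unfolding cylinder_def by fastforce
  qed
qed

lemma gdiam_cylinder_le:
  "gdiam mdist (cylinder R (\<lambda>_. int T) c :: ('a::{field,finite} fls ^ 'n::finite ^ 'm::finite) set)
    \<le> ereal (real CARD('a) powr - real T)"
proof (rule gdiam_leI)
  fix A A' :: "'a fls ^ 'n ^ 'm" assume "A \<in> cylinder R (\<lambda>_. int T) c" "A' \<in> cylinder R (\<lambda>_. int T) c"
  then have "mdist A A' \<le> real CARD('a) powr - real_of_int (int T)"
    by (intro mdist_le_powr_if_vanishes_below vanishes_below_cylinder_diff) auto
  then show "mdist A A' \<le> real CARD('a) powr - real T" by simp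
qed

lemma ex_fine_precision:
  fixes k mn s :: real
  assumes "k > 1" "s > mn" "\<delta> > 0" "\<eta> > 0"
  obtains T :: nat where "k powr - real T \<le> \<delta>" "k powr (mn * (real T + real R)) * k powr (- real T * s) \<le> \<eta>"
proof -
  have "k powr (mn * (real T + real R)) * k powr (- real T * s) = k powr (mn * real R) * (k powr (mn - s)) ^ T"
    for T using assms(1) by (simp add: powr_realpow[symmetric] powr_powr powr_add[symmetric] algebra_simps)
  moreover have "(\<lambda>T. k powr (mn * real R) * (k powr (mn - s)) ^ T) \<longlonglongrightarrow> 0"
    using assms(1,2) by (intro tendsto_mult_right_zero LIMSEQ_power_zero) (auto simp: powr_less_one)
  ultimately have "\<forall>\<^sub>F T in sequentially. k powr (mn * (real T + real R)) * k powr (- real T * s) < \<eta>"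
    using \<open>\<eta> > 0\<close> by (simp add: order_tendstoD(2))
  moreover have "k powr - real T = (1 / k) ^ T" for T
    using assms(1) by (simp add: powr_minus_divide powr_realpow power_one_over)
  then have "\<forall>\<^sub>F T in sequentially. k powr - real T < \<delta>"
    using order_tendstoD(2)[OF LIMSEQ_power_zero[of "1 / k"] \<open>\<delta> > 0\<close>] assms(1) by simp
  ultimately obtain T where "k powr - real T < \<delta>" "k powr (mn * (real T + real R)) * k powr (- real T * s) < \<eta>"
    using eventually_conj eventually_sequentially by (metis (no_types, lifting) order_refl)
  then show ?thesis using that by (meson less_imp_le)
qed

lemma hausdorff_measure_eq_0_above_full_dim:
  fixes S :: "('a::{field,finite} fls ^ 'n::finite ^ 'm::finite) set"
  assumes s: "s > real (CARD('m) * CARD('n))"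
  shows "hausdorff_measure mdist s S = 0"
proof (rule hausdorff_measure_zeroI)
  fix \<delta> e :: real assume "\<delta> > 0" "e > 0"
  define k where "k = real CARD('a)"
  have k: "k > 1" using two_le_card_field[where 'a='a] by (simp add: k_def)
  define mn where "mn = real (CARD('m) * CARD('n))"
  have "s \<ge> 0" using s by (smt (verit) of_nat_0_le_iff)
  have "\<exists>T::nat. k powr - real T \<le> \<delta> \<and> k powr (mn * (real T + real R)) * k powr (- real T * s) \<le> e / 2 ^ Suc R"
    for R
    by (rule ex_fine_precision[OF k s[folded mn_def] \<open>\<delta> > 0\<close>, where \<eta> = "e / 2 ^ Suc R" and R = R])
      (use \<open>e > 0\<close> in auto)
  then obtain T where T: "\<And>R. k powr - real (T R) \<le> \<delta>"
      "\<And>R. k powr (mn * (real (T R) + real R)) * k powr (- real (T R) * s) \<le> e / 2 ^ Suc R"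
    by metis
  define L where "L R = (\<lambda>_::'m. int (T R))" for R
  define X where "X R = (cyl_labels R (L R) :: ('m \<times> 'n \<times> int \<Rightarrow> 'a) set)" for R
  have diam: "gdiam mdist (cylinder R (L R) c :: ('a fls ^ 'n ^ 'm) set) \<le> ereal (k powr - real (T R))" for R c
    unfolding L_def k_def by (rule gdiam_cylinder_le)
  have card_X: "real (card (X R)) = k powr (mn * (real (T R) + real R))" for R
  proof -
    have "card (cyl_index R (L R) :: ('m \<times> 'n \<times> int) set) = CARD('m) * CARD('n) * (T R + R)"
      by (simp add: card_cyl_index L_def nat_add_distrib)
    then show ?thesis using k by (simp add: X_def card_cyl_labels k_def mn_def powr_realpow[symmetric])
  qed
  show "hausdorff_delta mdist s \<delta> S \<le> ennreal e"
  proof (rule hausdorff_delta_le_layered_cover[where X = X and U = "\<lambda>R. cylinder R (L R)"])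
    show "S \<subseteq> (\<Union>R. \<Union>c\<in>X R. cylinder R (L R) c)"
    proof
      fix A assume "A \<in> S"
      obtain R where "A \<in> coeff_box R" using ex_coeff_box by blast
      then have "A \<in> (\<Union>c\<in>X R. cylinder R (L R) c)"
        unfolding X_def by (rule subsetD[OF coeff_box_subset_cylinders])
      then show "A \<in> (\<Union>R. \<Union>c\<in>X R. cylinder R (L R) c)" by blast
    qed
    show "gdiam mdist (cylinder R (L R) c) \<le> ereal \<delta>" if "c \<in> X R" for R c
      using order_trans[OF diam[of R c]] T(1)[of R] by simp
    fix R G assume "finite G" "G \<subseteq> X R"
    have "(\<Sum>c\<in>G. cover_term mdist s (cylinder R (L R) c)) \<le> ennreal (real (card (X R)) * (k powr - real (T R)) powr s)"
      using k \<open>s \<ge> 0\<close> diam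
      by (intro sum_cover_term_le_card \<open>G \<subseteq> _\<close> cover_term_le_powr) (auto simp: X_def finite_cyl_labels)
    also have "\<dots> \<le> ennreal (e / 2 ^ Suc R)"
      using T(2)[of R] by (intro ennreal_leI) (simp add: card_X powr_powr)
    finally show "(\<Sum>c\<in>G. cover_term mdist s (cylinder R (L R) c)) \<le> ennreal (e / 2 ^ Suc R)" .
  qed (use \<open>e > 0\<close> in \<open>auto simp: X_def countable_cyl_labels\<close>)
qed

section \<open>Cylinders adapted to a polynomial vector\<close>

definition approx_precision :: "'a::zero poly ^ 'm::finite \<Rightarrow> int \<Rightarrow> 'm \<Rightarrow> int" where
  "approx_precision q t = (\<lambda>i. if i = vdegree_index q then int (vdegree q) + 1 else t)"

lemma vanishes_below_pivot:
  fixes g x y :: "'a::{field,finite} fls"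
  assumes g: "g \<noteq> 0" "fls_subdegree g = - D" and "r < 0"
    and x: "vanishes_below (D + 1) x" and y: "vanishes_below (- r) y"
    and near: "vanishes_below (1 - r) (g * x + y - (poly_to_ls p - poly_to_ls p'))"
  shows "vanishes_below (D - r) x"
proof -
  have "vanishes_below (- D) g" using g by (simp add: vanishes_below_iff_subdegree)
  then have "vanishes_below (- D + (D + 1)) (g * x)" using x by (rule vanishes_below_mult)
  then have gx: "vanishes_below 1 (g * x)" by simp
  have "poly_to_ls p - poly_to_ls p' = (g * x + y) - (g * x + y - (poly_to_ls p - poly_to_ls p'))" by simp
  also have "vanishes_below 1 \<dots>"
    using \<open>r < 0\<close> by (intro vanishes_below_diff vanishes_below_add gx
        vanishes_below_mono[OF y] vanishes_below_mono[OF near]) auto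
  finally have "poly_to_ls p = poly_to_ls p'" by (rule poly_to_ls_eq_if_vanishes_below_1)
  then have "g * x = (g * x + y - (poly_to_ls p - poly_to_ls p')) - y" by simp
  also have "vanishes_below (- r) \<dots>"
    by (intro vanishes_below_diff vanishes_below_mono[OF near] y) simp
  finally show ?thesis using vanishes_below_mult_cancel[OF g(1)] g(2) by force
qed

lemma vanishes_below_approx_cylinder_diff:
  fixes q :: "'a::{field,finite} poly ^ 'm::finite" and A A' :: "'a fls ^ 'n::finite ^ 'm"
  assumes "q \<noteq> 0"
    and A: "A \<in> cylinder R (approx_precision q (int (vdegree q) - r)) c"
      "dist_int (qA q A) < real CARD('a) powr real_of_int r"
    and A': "A' \<in> cylinder R (approx_precision q (int (vdegree q) - r)) c"
      "dist_int (qA q A') < real CARD('a) powr real_of_int r"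
  shows "vanishes_below (int (vdegree q) - r) (A $ i $ j - A' $ i $ j)"
proof (cases "r \<ge> 0")
  case True
  then show ?thesis
    by (intro vanishes_below_cylinder_diff[OF A(1) A'(1)]) (auto simp: approx_precision_def)
next
  case False
  define D where "D = int (vdegree q)"
  define i0 where "i0 = vdegree_index q"
  define Q where "Q i = poly_to_ls (q $ i)" for i
  define d where "d i = A $ i $ j - A' $ i $ j" for i
  define rest where "rest = (\<Sum>i\<in>UNIV - {i0}. Q i * d i)"
  have Q_i0: "Q i0 \<noteq> 0" "fls_subdegree (Q i0) = - D"
    using vdegree_index_attains[OF \<open>q \<noteq> 0\<close>] by (auto simp: Q_def D_def i0_def fls_subdegree_poly_to_ls)
  have other_rows: "vanishes_below (D - r) (d i)" if "i \<noteq> i0" for i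
    unfolding d_def using that
    by (intro vanishes_below_cylinder_diff[OF A(1) A'(1)]) (auto simp: approx_precision_def D_def i0_def)
  have "vanishes_below (- D) (Q i)" for i
    unfolding Q_def D_def by (rule vanishes_below_poly_to_ls[OF degree_le_vdegree])
  then have "vanishes_below (- D + (D - r)) (Q i * d i)" if "i \<noteq> i0" for i
    using other_rows[OF that] by (rule vanishes_below_mult)
  then have rest: "vanishes_below (- r) rest"
    unfolding rest_def by (intro vanishes_below_sum) simp
  have pivot_row: "vanishes_below (D + 1) (d i0)"
    unfolding d_def by (intro vanishes_below_cylinder_diff[OF A(1) A'(1)]) (auto simp: approx_precision_def D_def i0_def)
  obtain P P' :: "'a poly ^ 'n" where
    P: "vanishes_below (1 - r) (qA q A $ j - poly_to_ls (P $ j))" and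
    P': "vanishes_below (1 - r) (qA q A' $ j - poly_to_ls (P' $ j))"
    using dist_int_less_powrD[OF A(2)] dist_int_less_powrD[OF A'(2)] by metis
  have "qA q A $ j - qA q A' $ j = (\<Sum>i\<in>UNIV. Q i * d i)"
    by (simp add: qA_nth Q_def d_def sum_subtractf[symmetric] right_diff_distrib)
  also have "\<dots> = Q i0 * d i0 + rest"
    unfolding rest_def by (rule sum.remove) auto
  finally have eq: "(qA q A $ j - poly_to_ls (P $ j)) - (qA q A' $ j - poly_to_ls (P' $ j))
      = Q i0 * d i0 + rest - (poly_to_ls (P $ j) - poly_to_ls (P' $ j))"
    by (simp add: algebra_simps)
  have near: "vanishes_below (1 - r) (Q i0 * d i0 + rest - (poly_to_ls (P $ j) - poly_to_ls (P' $ j)))"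
    using vanishes_below_diff[OF P P'] by (simp only: eq)
  have "vanishes_below (D - r) (d i0)"
    by (rule vanishes_below_pivot[OF Q_i0 _ pivot_row rest near]) (use False in simp)
  then show ?thesis using other_rows by (cases "i = i0") (auto simp: d_def D_def)
qed

lemma card_cyl_labels_approx_precision:
  assumes "t \<ge> 0"
  shows "real (card (cyl_labels R (approx_precision q t) :: ('m::finite \<times> 'n::finite \<times> int \<Rightarrow> 'a::finite) set))
    = real CARD('a) powr (real CARD('n) * (real (vdegree q) + 1 + real R)
        + real (CARD('n) * (CARD('m) - 1)) * (real_of_int t + real R))"
proof -
  let ?L = "approx_precision q t" and ?i0 = "vdegree_index q"
  have "card (cyl_index R ?L :: ('m \<times> 'n \<times> int) set)
      = CARD('n) * nat (?L ?i0 + int R) + (\<Sum>i\<in>UNIV - {?i0}. CARD('n) * nat (?L i + int R))"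
    unfolding card_cyl_index by (rule sum.remove) auto
  also have "(\<Sum>i\<in>UNIV - {?i0}. CARD('n) * nat (?L i + int R)) = (\<Sum>i\<in>UNIV - {?i0}. CARD('n) * (nat t + R))"
    by (rule sum.cong) (use assms in \<open>auto simp: approx_precision_def nat_add_distrib\<close>)
  finally have "card (cyl_index R ?L :: ('m \<times> 'n \<times> int) set)
      = CARD('n) * (vdegree q + 1 + R) + CARD('n) * (CARD('m) - 1) * (nat t + R)"
    by (simp add: approx_precision_def nat_add_distrib card_Diff_singleton)
  moreover obtain m1 where "CARD('m) = Suc m1" using not0_implies_Suc[of "CARD('m)"] by auto
  ultimately show ?thesis
    using assms by (simp add: card_cyl_labels powr_realpow[symmetric] algebra_simps)
qed

lemma approx_cylinders_content_le:
  fixes q :: "'a::{field,finite} poly ^ 'm::finite" and psi :: "'a poly ^ 'm \<Rightarrow> real" and R :: nat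
  assumes "q \<noteq> 0" and psi: "psi q = real CARD('a) powr real_of_int r"
    and t: "t = int (vdegree q) - r" "t \<ge> 0"
    and e: "e \<le> s - real (CARD('n) * (CARD('m) - 1))" and "s \<ge> 0"
  defines "U \<equiv> \<lambda>c. cylinder R (approx_precision q t) c \<inter> {A :: 'a fls ^ 'n::finite ^ 'm. dist_int (qA q A) < psi q}"
  shows "gdiam mdist (U c) \<le> ereal (psi q / pnorm q)"
    and "(\<Sum>c\<in>cyl_labels R (approx_precision q t). cover_term mdist s (U c))
      \<le> ennreal (real CARD('a) powr (real CARD('n) * (real R + 1) + real (CARD('n) * (CARD('m) - 1)) * real R)
                 * (pnorm q ^ CARD('n) * (psi q / pnorm q) powr e))"
proof -
  define k where "k = real CARD('a)"
  have k: "k > 1" using two_le_card_field[where 'a='a] by (simp add: k_def)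
  define n where "n = real CARD('n)"
  define nm1 where "nm1 = real (CARD('n) * (CARD('m) - 1))"
  define D where "D = real (vdegree q)"
  have pnorm: "pnorm q = k powr D"
    using pnorm_eq_power_vdegree[OF \<open>q \<noteq> 0\<close>] k by (simp add: k_def D_def powr_realpow)
  have scale: "psi q / pnorm q = k powr - real_of_int t"
    using k by (simp add: psi pnorm t(1) D_def k_def powr_diff[symmetric])
  show diam: "gdiam mdist (U c) \<le> ereal (psi q / pnorm q)" for c
  proof (rule gdiam_leI)
    fix A A' assume "A \<in> U c" "A' \<in> U c"
    then show "mdist A A' \<le> psi q / pnorm q"
      unfolding scale k_def U_def t(1) using psi
      by (intro mdist_le_powr_if_vanishes_below vanishes_below_approx_cylinder_diff[OF \<open>q \<noteq> 0\<close>]) auto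
  qed
  have "(\<Sum>c\<in>cyl_labels R (approx_precision q t). cover_term mdist s (U c))
      \<le> ennreal (real (card (cyl_labels R (approx_precision q t) :: ('m \<times> 'n \<times> int \<Rightarrow> 'a) set)) * (psi q / pnorm q) powr s)"
    using k \<open>s \<ge> 0\<close> diam
    by (intro sum_cover_term_le_card finite_cyl_labels cover_term_le_powr) (auto simp: scale)
  also have "real (card (cyl_labels R (approx_precision q t) :: ('m \<times> 'n \<times> int \<Rightarrow> 'a) set))
      = k powr (n * (D + 1 + real R) + nm1 * (real_of_int t + real R))"
    unfolding card_cyl_labels_approx_precision[OF t(2)] by (simp add: k_def n_def nm1_def D_def)
  also have "k powr (n * (D + 1 + real R) + nm1 * (real_of_int t + real R)) * (psi q / pnorm q) powr s
      \<le> k powr (n * (real R + 1) + nm1 * real R) * (pnorm q ^ CARD('n) * (psi q / pnorm q) powr e)"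
  proof -
    have "real_of_int t * (nm1 + e - s) \<le> 0" using t(2) e by (intro mult_nonneg_nonpos) (auto simp: nm1_def)
    then have exponents: "n * (D + 1 + real R) + nm1 * (real_of_int t + real R) + - real_of_int t * s
        \<le> n * (real R + 1) + nm1 * real R + (D * n + - real_of_int t * e)"
      by (simp add: algebra_simps)
    have "pnorm q ^ CARD('n) = k powr (D * n)"
      using k by (simp add: pnorm n_def powr_realpow[symmetric] powr_powr)
    then show ?thesis
      using powr_mono[OF exponents] k unfolding scale powr_powr powr_add by simp
  qed
  finally show "(\<Sum>c\<in>cyl_labels R (approx_precision q t). cover_term mdist s (U c))
      \<le> ennreal (real CARD('a) powr (real CARD('n) * (real R + 1) + real (CARD('n) * (CARD('m) - 1)) * real R)
                 * (pnorm q ^ CARD('n) * (psi q / pnorm q) powr e))"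
    by (simp add: k_def n_def nm1_def ennreal_leI)
qed

lemma scale_of_large_vdegree:
  fixes q :: "'a::{field,finite} poly ^ 'm::finite"
  assumes "q \<noteq> 0" and x: "x = real CARD('a) powr real_of_int r" "x \<le> B"
    and large: "B / \<rho> < real CARD('a) ^ vdegree q" and "0 < \<rho>" "\<rho> \<le> 1"
  shows "int (vdegree q) - r \<ge> 0" "x / pnorm q \<le> \<rho>"
proof -
  define k where "k = real CARD('a)"
  have k: "k > 1" using two_le_card_field[where 'a='a] by (simp add: k_def)
  have pnorm_q: "pnorm q = k ^ vdegree q" using pnorm_eq_power_vdegree[OF \<open>q \<noteq> 0\<close>] by (simp add: k_def)
  then have "pnorm q > 0" using k by simp
  have "x < pnorm q * \<rho>"
    using large x(2) pos_divide_less_eq[OF \<open>0 < \<rho>\<close>, of B] by (simp add: pnorm_q k_def)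
  then have "x / pnorm q < \<rho>" using \<open>pnorm q > 0\<close> by (simp add: mult.commute pos_divide_less_eq)
  then show "x / pnorm q \<le> \<rho>" by simp
  have "k powr - real_of_int (int (vdegree q) - r) = x / pnorm q"
    using k x(1) pnorm_q by (simp add: k_def powr_realpow[symmetric] powr_diff[symmetric])
  then have "k powr - real_of_int (int (vdegree q) - r) < k powr 0"
    using \<open>x / pnorm q < \<rho>\<close> \<open>\<rho> \<le> 1\<close> k by simp
  then have "- real_of_int (int (vdegree q) - r) < 0" by (simp only: powr_less_cancel_iff[OF k])
  then show "int (vdegree q) - r \<ge> 0" by simp
qed

section \<open>The covering argument\<close>

lemma summable_on_small_tail:
  fixes f :: "'b \<Rightarrow> real"
  assumes "f summable_on Z" "\<And>x. x \<in> Z \<Longrightarrow> f x \<ge> 0" "\<eta> > 0"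
  obtains F0 where "finite F0" "F0 \<subseteq> Z" "\<And>G. finite G \<Longrightarrow> G \<subseteq> Z - F0 \<Longrightarrow> sum f G \<le> \<eta>"
proof -
  have "(sum f \<longlongrightarrow> infsum f Z) (finite_subsets_at_top Z)"
    using has_sum_infsum[OF assms(1)] by (simp add: has_sum_def)
  then have "\<forall>\<^sub>F F in finite_subsets_at_top Z. dist (sum f F) (infsum f Z) < \<eta>"
    using assms(3) by (simp add: tendsto_iff)
  then obtain F0 where F0: "finite F0" "F0 \<subseteq> Z"
    and close: "\<And>Y. finite Y \<Longrightarrow> F0 \<subseteq> Y \<Longrightarrow> Y \<subseteq> Z \<Longrightarrow> dist (sum f Y) (infsum f Z) < \<eta>"
    unfolding eventually_finite_subsets_at_top by metis
  show ?thesis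
  proof (rule that[OF F0])
    fix G assume G: "finite G" "G \<subseteq> Z - F0"
    have "sum f F0 + sum f G = sum f (F0 \<union> G)"
      using F0(1) G by (intro sum.union_disjoint[symmetric]) auto
    also have "\<dots> \<le> infsum f Z"
      using F0 G assms(2) by (intro finite_sum_le_infsum[OF assms(1)]) auto
    finally show "sum f G \<le> \<eta>"
      using close[OF F0(1) order_refl F0(2)] by (simp add: dist_real_def)
  qed
qed

lemma small_tails_of_large_vdegree:
  fixes f :: "'a::{zero,finite} poly ^ 'm::finite \<Rightarrow> real"
  assumes "f summable_on (UNIV - {0})" "\<And>q. f q \<ge> 0" "\<And>R::nat. \<eta> R > 0"
  obtains N where "\<And>R G. finite G \<Longrightarrow> (\<And>q. q \<in> G \<Longrightarrow> q \<noteq> 0 \<and> N R \<le> vdegree q) \<Longrightarrow> sum f G \<le> \<eta> R"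
proof -
  have "\<exists>F0. finite F0 \<and> (\<forall>G. finite G \<longrightarrow> G \<subseteq> (UNIV - {0}) - F0 \<longrightarrow> sum f G \<le> \<eta> R)" for R
    by (rule summable_on_small_tail[OF assms(1) _ assms(3)]) (use assms(2) in auto)
  then obtain F0 where F0: "\<And>R. finite (F0 R)"
    "\<And>R G. finite G \<Longrightarrow> G \<subseteq> (UNIV - {0}) - F0 R \<Longrightarrow> sum f G \<le> \<eta> R"
    by metis
  define N where "N R = Suc (Max (insert 0 (vdegree ` F0 R)))" for R
  have "q \<notin> F0 R" if "N R \<le> vdegree q" for q R
  proof
    assume "q \<in> F0 R"
    then have "vdegree q \<le> Max (insert 0 (vdegree ` F0 R))" using F0(1) by (intro Max_ge) auto
    then show False using that by (simp add: N_def)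
  qed
  show ?thesis
  proof (rule that)
    fix R and G :: "('a poly ^ 'm) set"
    assume G: "finite G" "\<And>q. q \<in> G \<Longrightarrow> q \<noteq> 0 \<and> N R \<le> vdegree q"
    then have "G \<subseteq> (UNIV - {0}) - F0 R" using \<open>\<And>q R. N R \<le> vdegree q \<Longrightarrow> q \<notin> F0 R\<close> by blast
    then show "sum f G \<le> \<eta> R" by (rule F0(2)[OF G(1)])
  qed
qed

lemma W_set_subset_approx_cylinders:
  fixes psi :: "'a::{field,finite} poly ^ 'm::finite \<Rightarrow> real"
  shows "(W_set psi :: ('a fls ^ 'n::finite ^ 'm) set)
    \<subseteq> (\<Union>R. \<Union>q\<in>{q. q \<noteq> 0 \<and> psi q > 0 \<and> N R \<le> vdegree q}. \<Union>c\<in>cyl_labels R (L q).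
          cylinder R (L q) c \<inter> {A. dist_int (qA q A) < psi q})"
proof
  fix A :: "'a fls ^ 'n ^ 'm" assume "A \<in> W_set psi"
  obtain R where R: "A \<in> coeff_box R" using ex_coeff_box by blast
  have "infinite ({q. dist_int (qA q A) < psi q} - ({0} \<union> {q. vdegree q \<le> N R}))"
    using \<open>A \<in> W_set psi\<close> finite_vdegree_le by (intro Diff_infinite_finite) (auto simp: W_set_def)
  then obtain q where "q \<in> {q. dist_int (qA q A) < psi q} - ({0} \<union> {q. vdegree q \<le> N R})"
    using infinite_imp_nonempty by blast
  then have q: "q \<in> {q. q \<noteq> 0 \<and> psi q > 0 \<and> N R \<le> vdegree q}" "A \<in> {A. dist_int (qA q A) < psi q}"
    using dist_int_nonneg[of "qA q A"] by auto
  have "A \<in> (\<Union>c\<in>cyl_labels R (L q). cylinder R (L q) c)"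
    by (rule subsetD[OF coeff_box_subset_cylinders R])
  then obtain c where "c \<in> cyl_labels R (L q)" "A \<in> cylinder R (L q) c" by (rule UN_E)
  with q show "A \<in> (\<Union>R. \<Union>q\<in>{q. q \<noteq> 0 \<and> psi q > 0 \<and> N R \<le> vdegree q}. \<Union>c\<in>cyl_labels R (L q).
          cylinder R (L q) c \<inter> {A. dist_int (qA q A) < psi q})"
    by blast
qed

lemma zero_in_W_set: "infinite {q. psi q > 0} \<Longrightarrow> 0 \<in> W_set psi"
  by (simp add: W_set_def dist_int_0)

lemma summable_of_eta_less:
  assumes "eta psi TYPE('n::finite) < ereal x"
  obtains e where "e < x" "(\<lambda>q. pnorm q ^ CARD('n) * (psi q / pnorm q) powr e) summable_on (UNIV - {0})"
  using assms unfolding eta_def by (subst (asm) Inf_less_iff) auto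

lemma hausdorff_measure_W_set_eq_0:
  fixes psi :: "'a::{field,finite} poly ^ 'm::finite \<Rightarrow> real"
  assumes psi_values: "\<And>q. psi q = 0 \<or> (\<exists>r::int. psi q = real CARD('a) powr real_of_int r)"
    and bounded: "\<And>q. psi q \<le> B"
    and summable: "(\<lambda>q. pnorm q ^ CARD('n) * (psi q / pnorm q) powr e) summable_on (UNIV - {0})"
    and e: "e \<le> s - real (CARD('n) * (CARD('m) - 1))" and "s \<ge> 0"
  shows "hausdorff_measure mdist s (W_set psi :: ('a fls ^ 'n::finite ^ 'm) set) = 0"
proof (rule hausdorff_measure_zeroI)
  fix \<delta> \<epsilon> :: real assume "\<delta> > 0" "\<epsilon> > 0"
  define k where "k = real CARD('a)"
  have k: "k > 1" using two_le_card_field[where 'a='a] by (simp add: k_def)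
  define f where "f q = pnorm q ^ CARD('n) * (psi q / pnorm q) powr e" for q
  define C where "C R = k powr (real CARD('n) * (real R + 1) + real (CARD('n) * (CARD('m) - 1)) * real R)"
    for R :: nat
  have C_pos: "C R > 0" for R using k by (simp add: C_def)
  have f_nonneg: "f q \<ge> 0" for q by (simp add: f_def pnorm_nonneg)
  define expo where "expo q = (SOME r::int. psi q = k powr real_of_int r)" for q
  define t where "t q = int (vdegree q) - expo q" for q
  have expo: "psi q = k powr real_of_int (expo q)" if "psi q > 0" for q
  proof -
    have "\<exists>r::int. psi q = k powr real_of_int r" using psi_values[of q] that by (auto simp: k_def)
    then show ?thesis unfolding expo_def by (rule someI_ex)
  qed
  have "f summable_on (UNIV - {0})" using summable unfolding f_def .
  then obtain N where N: "\<And>R G. finite G \<Longrightarrow> (\<And>q. q \<in> G \<Longrightarrow> q \<noteq> 0 \<and> N R \<le> vdegree q)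
      \<Longrightarrow> sum f G \<le> \<epsilon> / 2 ^ Suc R / C R"
    by (rule small_tails_of_large_vdegree[where \<eta> = "\<lambda>R. \<epsilon> / 2 ^ Suc R / C R", OF _ f_nonneg])
      (use \<open>\<epsilon> > 0\<close> C_pos in auto)
  obtain N0 :: nat where N0: "B / min \<delta> 1 < k ^ N0" using real_arch_pow[OF k] by blast
  define Q where "Q R = {q. q \<noteq> 0 \<and> psi q > 0 \<and> max N0 (N R) \<le> vdegree q}" for R
  have scale: "t q \<ge> 0" "psi q / pnorm q \<le> \<delta>" if "q \<in> Q R" for q R
  proof -
    have q: "q \<noteq> 0" "psi q > 0" "N0 \<le> vdegree q" using that by (auto simp: Q_def)
    have "k ^ N0 \<le> k ^ vdegree q" using k q(3) by (intro power_increasing) auto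
    then have "B / min \<delta> 1 < real CARD('a) ^ vdegree q" using N0 by (simp add: k_def)
    from scale_of_large_vdegree[OF q(1) expo[OF q(2), unfolded k_def] bounded this]
    show "t q \<ge> 0" "psi q / pnorm q \<le> \<delta>" using \<open>\<delta> > 0\<close> by (auto simp: t_def)
  qed
  show "hausdorff_delta mdist s \<delta> (W_set psi :: ('a fls ^ 'n ^ 'm) set) \<le> ennreal \<epsilon>"
  proof (rule hausdorff_delta_le_tail_cover[where Q = Q and P = "\<lambda>R q. cyl_labels R (approx_precision q (t q))"
        and U = "\<lambda>R q c. cylinder R (approx_precision q (t q)) c \<inter> {A :: 'a fls ^ 'n ^ 'm. dist_int (qA q A) < psi q}"
        and g = "\<lambda>R q. C R * f q"])
    show "countable (Q R)" for R using countable_subset[OF _ countable_poly_vec] by blast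
    show "(W_set psi :: ('a fls ^ 'n ^ 'm) set) \<subseteq> (\<Union>R. \<Union>q\<in>Q R. \<Union>c\<in>cyl_labels R (approx_precision q (t q)).
        cylinder R (approx_precision q (t q)) c \<inter> {A :: 'a fls ^ 'n ^ 'm. dist_int (qA q A) < psi q})"
      unfolding Q_def by (rule W_set_subset_approx_cylinders)
    fix R q assume "q \<in> Q R"
    then have q: "q \<noteq> 0" "psi q = real CARD('a) powr real_of_int (expo q)"
      using expo by (auto simp: Q_def k_def)
    note content = approx_cylinders_content_le[where q = q and psi = psi and 'n = 'n,
        OF q t_def[of q] scale(1)[OF \<open>q \<in> Q R\<close>] e \<open>s \<ge> 0\<close>]
    show "gdiam mdist (cylinder R (approx_precision q (t q)) c \<inter> {A :: 'a fls ^ 'n ^ 'm. dist_int (qA q A) < psi q})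
        \<le> ereal \<delta>" for c
      using order_trans[OF content(1)] scale(2)[OF \<open>q \<in> Q R\<close>] by simp
    show "(\<Sum>c\<in>cyl_labels R (approx_precision q (t q)).
        cover_term mdist s (cylinder R (approx_precision q (t q)) c \<inter> {A :: 'a fls ^ 'n ^ 'm. dist_int (qA q A) < psi q}))
      \<le> ennreal (C R * f q)"
      using content(2) by (simp add: C_def f_def k_def)
  next
    fix R F assume "finite F" "F \<subseteq> Q R"
    then have "sum f F \<le> \<epsilon> / 2 ^ Suc R / C R" by (intro N) (auto simp: Q_def)
    then show "sum (\<lambda>q. C R * f q) F \<le> \<epsilon> / 2 ^ Suc R"
      using C_pos[of R] by (simp add: sum_distrib_left[symmetric] pos_le_divide_eq mult_ac)
  qed (use C_pos f_nonneg \<open>\<epsilon> > 0\<close> in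
      \<open>auto intro: mult_nonneg_nonneg less_imp_le simp: finite_cyl_labels\<close>)
qed

theorem lemma10:
  fixes psi :: "'a::{field,finite} poly ^ 'm::finite \<Rightarrow> real"
  assumes psi_values: "\<And>q. psi q = 0 \<or> (\<exists>r::int. psi q = real CARD('a) powr real_of_int r)"
    and bounded: "\<exists>B. \<forall>q. psi q \<le> B"
    and infpos: "infinite {q. psi q > 0}"
  shows "hausdorff_dim mdist (W_set psi :: ('a fls ^ 'n::finite ^ 'm) set)
           \<le> ereal (real (CARD('n) * (CARD('m) - 1))) + min (eta psi TYPE('n)) (ereal (real CARD('n)))"
proof (rule hausdorff_dim_le)
  obtain B where B: "\<And>q. psi q \<le> B" using bounded by blast
  define nm1 where "nm1 = real (CARD('n) * (CARD('m) - 1))"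
  fix s :: real
  assume "s \<ge> 0" and "ereal nm1 + min (eta psi TYPE('n)) (ereal (real CARD('n))) < ereal s"
  then have "min (eta psi TYPE('n)) (ereal (real CARD('n))) < ereal (s - nm1)"
    by (cases "min (eta psi TYPE('n)) (ereal (real CARD('n)))") auto
  then consider "eta psi TYPE('n) < ereal (s - nm1)" | "real (CARD('m) * CARD('n)) < s"
    using not0_implies_Suc[of "CARD('m)"] by (fastforce simp: nm1_def min_less_iff_disj algebra_simps)
  then show "hausdorff_measure mdist s (W_set psi :: ('a fls ^ 'n ^ 'm) set) = 0"
  proof cases
    case 1
    then obtain e where "e < s - nm1"
      and summable: "(\<lambda>q. pnorm q ^ CARD('n) * (psi q / pnorm q) powr e) summable_on (UNIV - {0})"
      by (rule summable_of_eta_less)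
    then show ?thesis
      using \<open>s \<ge> 0\<close> by (intro hausdorff_measure_W_set_eq_0[OF psi_values B summable]) (auto simp: nm1_def)
  next
    case 2
    then show ?thesis by (rule hausdorff_measure_eq_0_above_full_dim)
  qed
qed (use zero_in_W_set[OF infpos] in auto)

end
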